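(* Let $p$ be an odd prime, $k\ge1$, and write $\phi(p^k)=2^\theta\mu$ with $\mu$ odd. For every integer $r\ge1$, the graph $\mathcal{U}_{p^k}$ has a connected component isomorphic to $C_r(T_2^\theta)$ if and only if $\mu$ is divisible by some triggering divisor of $r$.
   Context: $\mathcal{G}_{n}$ is the directed graph on $\{0,\dots,n-1\}$ with an edge $x\to x^2\bmod n$ for each $x$, and $\mathcal{U}_n$ is its subgraph induced on the units mod $n$. $\phi$ is Euler's totient function. For odd $d\ge1$, $\mathrm{ord}_d(2)$ is the least positive integer $r$ with $d\mid 2^r-1$. A positive odd integer $d$ is a triggering divisor for $r$ if $\mathrm{ord}_d(2)=r$ and $\mathrm{ord}_e(2)\neq r$ for every proper positive divisor $e$ of $d$. The regular grounded tree $T_w^\ell$ has $w^\ell$ vertices in layers $0,\dots,\ell$. Layer $0$ is the root, which has a loop. Layer $1$ has $w-1$ vertices mapping to the root. Each vertex of layer $j$, $1\le j<\ell$, has exactly $w$ vertices of layer $j+1$ mapping to it. Layer $\ell$ consists of leaves. For a grounded tree $T$ and $\alpha\ge1$, the flower cycle $C_\alpha(T)$ is built as follows: take $\alpha$ disjoint copies of $T$, delete the root loops, and join the roots by edges root$_i\to$root$_{i+1 \bmod \alpha}$. *)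

theory Defs
  imports "HOL-Number_Theory.Number_Theory"
begin

type_synonym 'a digraph = "'a set \<times> ('a \<times> 'a) set"

definition sq_graph :: "nat \<Rightarrow> nat digraph" where
  "sq_graph n = ({0..<n}, {(x, x^2 mod n) | x. x < n})"

definition induced :: "'a digraph \<Rightarrow> 'a set \<Rightarrow> 'a digraph" where
  "induced G S = (fst G \<inter> S, {(x, y) \<in> snd G. x \<in> S \<and> y \<in> S})"

definition unit_graph :: "nat \<Rightarrow> nat digraph" where
  "unit_graph n = induced (sq_graph n) {x. x < n \<and> coprime x n}"

definition component :: "'a digraph \<Rightarrow> 'a \<Rightarrow> 'a set" where
  "component G x =
     {y \<in> fst G. (x, y) \<in> ({(u, v) \<in> snd G. u \<in> fst G \<and> v \<in> fst G}
                      \<union> {(u, v) \<in> snd G. u \<in> fst G \<and> v \<in> fst G}\<inverse>)\<^sup>*}"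

definition connected_components :: "'a digraph \<Rightarrow> 'a set set" where
  "connected_components G = component G ` fst G"

definition digraph_iso :: "'a digraph \<Rightarrow> 'b digraph \<Rightarrow> bool" where
  "digraph_iso G H \<longleftrightarrow>
     (\<exists>h. bij_betw h (fst G) (fst H) \<and>
          (\<forall>x\<in>fst G. \<forall>y\<in>fst G. (x, y) \<in> snd G \<longleftrightarrow> (h x, h y) \<in> snd H))"

definition has_component_iso :: "'a digraph \<Rightarrow> 'b digraph \<Rightarrow> bool" where
  "has_component_iso G H \<longleftrightarrow>
     (\<exists>C\<in>connected_components G. digraph_iso (induced G C) H)"

type_synonym 'a gtree = "'a set \<times> ('a \<times> 'a) set \<times> 'a"

text \<open>Vertices are lists of length \<le> l; the root is [];
  a layer-1 vertex is [a] with 1 \<le> a < w; a layer-(j+1) vertex is xs @ [b] with b < w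
  for xs of layer j \<ge> 1.  Each non-root vertex maps to its butlast; the root has a loop.\<close>
definition reg_tree_vertices :: "nat \<Rightarrow> nat \<Rightarrow> nat list set" where
  "reg_tree_vertices w l =
     {xs. length xs \<le> l \<and> (xs \<noteq> [] \<longrightarrow> 1 \<le> hd xs \<and> (\<forall>a\<in>set xs. a < w))}"

definition reg_tree :: "nat \<Rightarrow> nat \<Rightarrow> nat list gtree" where
  "reg_tree w l = (reg_tree_vertices w l,
                   {(xs, butlast xs) | xs. xs \<in> reg_tree_vertices w l}, [])"

text \<open>Flower cycle C_\<alpha>(T): \<alpha> copies of T (indexed by 0..\<alpha>-1), root loops deleted,
  roots joined by root_i -> root_{(i+1) mod \<alpha>}.\<close>
definition flower_cycle :: "nat \<Rightarrow> 'a gtree \<Rightarrow> (nat \<times> 'a) digraph" where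
  "flower_cycle \<alpha> T = (case T of (V, E, rt) \<Rightarrow>
     ({0..<\<alpha>} \<times> V,
      {((i, u), (i, v)) | i u v. i < \<alpha> \<and> (u, v) \<in> E \<and> u \<noteq> rt}
      \<union> {((i, rt), ((i + 1) mod \<alpha>, rt)) | i. i < \<alpha>}))"

definition triggering_divisor :: "nat \<Rightarrow> nat \<Rightarrow> bool" where
  "triggering_divisor d r \<longleftrightarrow>
     d > 0 \<and> odd d \<and> ord d 2 = r \<and> (\<forall>e. e > 0 \<and> e dvd d \<and> e \<noteq> d \<longrightarrow> ord e 2 \<noteq> r)"

end

theory Submission
  imports Defs
begin

text \<open>
  Let \<open>g\<close> be a primitive root mod \<open>p^k\<close> and \<open>N = \<phi>(p^k) = 2^\<theta>\<mu>\<close>. Writing units as \<open>g^e\<close>,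
  squaring doubles \<open>e\<close> mod \<open>N\<close>, and by the Chinese remainder theorem \<open>e\<close> splits into a part
  mod \<open>2^\<theta>\<close>, on which doubling is nilpotent, and a part mod \<open>\<mu>\<close>, on which it is a permutation.

  If \<open>d\<close> divides \<open>\<mu>\<close> with \<open>ord_d(2) = r\<close> and \<open>\<mu> = c d\<close>, the vertex \<open>(i, xs)\<close> of
  \<open>C_r(T_2^\<theta>)\<close> is sent to \<open>g^e\<close> with \<open>e = \<mu> s + 2^\<theta> c 2^a\<close>: here \<open>s\<close> encodes the position
  of \<open>xs\<close> in the tree 2-adically (the root is 0, a vertex at depth \<open>j\<close> has 2-adic valuation
  \<open>\<theta> - j\<close>) and \<open>a = i - |xs|\<close> is the point of the cycle that \<open>xs\<close> eventually reaches.
  This embedding commutes with the two successor maps and its image is closed under taking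
  square roots, so the image is a whole component.

  Conversely, an \<open>r\<close>-cycle in a component gives a unit \<open>x\<close> of exact period \<open>r\<close> under
  squaring. Then \<open>D = ord(x)\<close> is odd with \<open>ord_D(2) = r\<close>, and \<open>D\<close> divides \<open>N\<close>, hence \<open>\<mu>\<close>;
  a minimal divisor of \<open>D\<close> with the same order of 2 is a triggering divisor.
\<close>

subsection \<open>Components of functional graphs\<close>

definition functional_graph :: "'a set \<Rightarrow> ('a \<Rightarrow> 'a) \<Rightarrow> 'a digraph" where
  "functional_graph U f = (U, {(x, f x) | x. x \<in> U})"

definition exact_period :: "('a \<Rightarrow> 'a) \<Rightarrow> nat \<Rightarrow> 'a \<Rightarrow> bool" where
  "exact_period f r x \<longleftrightarrow> (f ^^ r) x = x \<and> (\<forall>j. 0 < j \<and> j < r \<longrightarrow> (f ^^ j) x \<noteq> x)"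

lemma has_component_iso_functional_graphI:
  assumes fU: "f ` U \<subseteq> U" and sW: "s ` W \<subseteq> W"
    and inj: "inj_on h W" and hW: "h ` W \<subseteq> U"
    and hs: "\<And>u. u \<in> W \<Longrightarrow> h (s u) = f (h u)"
    and w: "w \<in> W" and reach: "\<And>u. u \<in> W \<Longrightarrow> \<exists>j. (s ^^ j) u = w"
    and preimage: "\<And>u z. u \<in> W \<Longrightarrow> z \<in> U \<Longrightarrow> f z = h u \<Longrightarrow> z \<in> h ` W"
  shows "has_component_iso (functional_graph U f) (functional_graph W s)"
proof -
  define G where "G = functional_graph U f"
  define R where "R = {(x, y) \<in> snd G. x \<in> fst G \<and> y \<in> fst G}"
  have R: "R = {(x, f x) | x. x \<in> U}"
    using fU by (auto simp: R_def G_def functional_graph_def)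
  define C where "C = component G (h w)"
  have C: "C = {y \<in> U. (h w, y) \<in> (R \<union> R\<inverse>)\<^sup>*}"
    by (simp add: C_def component_def R_def G_def functional_graph_def)
  have from_root: "y \<in> h ` W" if "(h w, y) \<in> (R \<union> R\<inverse>)\<^sup>*" for y
    using that
  proof (induction rule: rtrancl_induct)
    case base
    then show ?case using w by simp
  next
    case (step y z)
    then obtain u where u: "u \<in> W" "y = h u" by auto
    from step.hyps(2) show ?case
    proof
      assume "(y, z) \<in> R"
      then have "z = h (s u)" using u hs by (auto simp: R)
      then show ?thesis using u sW by blast
    next
      assume "(y, z) \<in> R\<inverse>"
      then show ?thesis using preimage u by (auto simp: R)
    qed
  qed
  have to_root: "(h u, h ((s ^^ j) u)) \<in> R\<^sup>*" if "u \<in> W" for u j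
    using that
  proof (induction j arbitrary: u)
    case 0
    then show ?case by simp
  next
    case (Suc j)
    have "(h u, h (s u)) \<in> R" using Suc.prems hs hW by (auto simp: R)
    moreover have "(h (s u), h ((s ^^ j) (s u))) \<in> R\<^sup>*" using Suc.IH Suc.prems sW by blast
    moreover have "(s ^^ Suc j) u = (s ^^ j) (s u)" by (simp only: funpow_Suc_right comp_apply)
    ultimately show ?case by (metis converse_rtrancl_into_rtrancl)
  qed
  have C_eq: "C = h ` W"
  proof
    show "C \<subseteq> h ` W" using from_root C by blast
  next
    show "h ` W \<subseteq> C"
    proof
      fix y assume "y \<in> h ` W"
      then obtain u where u: "u \<in> W" "y = h u" by auto
      obtain j where "(s ^^ j) u = w" using reach u by blast
      then have "(h u, h w) \<in> R\<^sup>*" using to_root u by metis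
      then have "(h w, h u) \<in> (R \<union> R\<inverse>)\<^sup>*"
        by (metis in_rtrancl_UnI rtrancl_converseI)
      then show "y \<in> C" using C u hW by auto
    qed
  qed
  have "C \<in> connected_components G"
    using w hW by (auto simp: connected_components_def C_def G_def functional_graph_def)
  moreover have "digraph_iso (induced G C) (functional_graph W s)"
    unfolding digraph_iso_def
  proof (intro exI[of _ "inv_into W h"] conjI ballI)
    have "fst (induced G C) = h ` W" using C_eq hW by (auto simp: induced_def G_def functional_graph_def)
    then show "bij_betw (inv_into W h) (fst (induced G C)) (fst (functional_graph W s))"
      using inj by (simp add: bij_betw_inv_into inj_on_imp_bij_betw functional_graph_def)
  next
    fix x y assume "x \<in> fst (induced G C)" "y \<in> fst (induced G C)"
    then obtain u v where uv: "u \<in> W" "v \<in> W" "x = h u" "y = h v"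
      using C_eq by (auto simp: induced_def G_def functional_graph_def)
    have "(x, y) \<in> snd (induced G C) \<longleftrightarrow> h v = f (h u)"
      using uv C_eq hW by (auto simp: induced_def G_def functional_graph_def)
    also have "\<dots> \<longleftrightarrow> v = s u" using hs uv inj sW by (metis image_subset_iff inj_onD)
    also have "\<dots> \<longleftrightarrow> (inv_into W h x, inv_into W h y) \<in> snd (functional_graph W s)"
      using uv inj by (auto simp: functional_graph_def)
    finally show "(x, y) \<in> snd (induced G C) \<longleftrightarrow>
        (inv_into W h x, inv_into W h y) \<in> snd (functional_graph W s)" .
  qed
  ultimately show ?thesis unfolding has_component_iso_def G_def by blast
qed

lemma exact_period_of_has_component_iso:
  assumes iso: "has_component_iso (functional_graph U f) (functional_graph W s)"
    and sW: "s ` W \<subseteq> W" and w: "w \<in> W" and per: "exact_period s r w"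
  shows "\<exists>x\<in>U. exact_period f r x"
proof -
  define G where "G = functional_graph U f"
  obtain C where "digraph_iso (induced G C) (functional_graph W s)"
    using iso unfolding has_component_iso_def G_def by blast
  then obtain \<phi> where bij: "bij_betw \<phi> (fst (induced G C)) W"
    and edge: "\<forall>x\<in>fst (induced G C). \<forall>y\<in>fst (induced G C).
                 (x, y) \<in> snd (induced G C) \<longleftrightarrow> (\<phi> x, \<phi> y) \<in> snd (functional_graph W s)"
    unfolding digraph_iso_def by (auto simp: functional_graph_def)
  define A where "A = fst (induced G C)"
  define y where "y i = inv_into A \<phi> ((s ^^ i) w)" for i
  have orbit: "(s ^^ i) w \<in> W" for i
    by (induction i) (use w sW in auto)
  have yA: "y i \<in> A" and \<phi>y: "\<phi> (y i) = (s ^^ i) w" for i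
    using bij orbit[of i] unfolding y_def A_def
    by (auto intro: bij_betw_apply[OF bij_betw_inv_into] bij_betw_inv_into_right)
  have y_Suc: "y (Suc i) = f (y i)" for i
  proof -
    have "(\<phi> (y i), \<phi> (y (Suc i))) \<in> snd (functional_graph W s)"
      using orbit[of i] by (auto simp: \<phi>y functional_graph_def)
    then have "(y i, y (Suc i)) \<in> snd G"
      using edge yA unfolding A_def by (auto simp: induced_def)
    then show ?thesis by (simp add: G_def functional_graph_def)
  qed
  have y_funpow: "y j = (f ^^ j) (y 0)" for j
    by (induction j) (simp_all add: y_Suc)
  have "(f ^^ j) (y 0) = y 0 \<longleftrightarrow> (s ^^ j) w = w" for j
    using bij_betw_imp_inj_on[OF bij] yA \<phi>y[of j] \<phi>y[of 0]
    unfolding y_funpow[symmetric] A_def by (metis funpow_0 inj_on_def)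
  moreover have "y 0 \<in> U" using yA[of 0] by (simp add: A_def induced_def G_def functional_graph_def)
  ultimately show ?thesis using per unfolding exact_period_def by blast
qed

subsection \<open>Flower cycles of regular trees as functional graphs\<close>

definition flower_succ :: "nat \<Rightarrow> nat \<times> 'a list \<Rightarrow> nat \<times> 'a list" where
  "flower_succ r u = (if snd u = [] then ((fst u + 1) mod r, []) else (fst u, butlast (snd u)))"

lemma Nil_in_reg_tree_vertices [simp]: "[] \<in> reg_tree_vertices w l"
  by (simp add: reg_tree_vertices_def)

lemma butlast_in_reg_tree_vertices:
  assumes "xs \<in> reg_tree_vertices w l"
  shows "butlast xs \<in> reg_tree_vertices w l"
proof -
  have "hd (butlast xs) = hd xs" if "butlast xs \<noteq> []"
    using that by (cases xs) auto
  then show ?thesis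
    using assms by (auto simp: reg_tree_vertices_def dest: in_set_butlastD)
qed

lemma flower_cycle_reg_tree_eq:
  "flower_cycle r (reg_tree w l) =
     functional_graph ({0..<r} \<times> reg_tree_vertices w l) (flower_succ r)"
  unfolding flower_cycle_def reg_tree_def flower_succ_def functional_graph_def
  using Nil_in_reg_tree_vertices[of w l] by (auto 0 4)

lemma flower_succ_closed:
  "flower_succ r ` ({0..<r} \<times> reg_tree_vertices w l) \<subseteq> {0..<r} \<times> reg_tree_vertices w l"
  by (auto simp: flower_succ_def butlast_in_reg_tree_vertices)

lemma funpow_flower_succ_Nil:
  assumes "i < r"
  shows "(flower_succ r ^^ m) (i, []) = ((i + m) mod r, [])"
  by (induction m) (use assms in \<open>simp_all add: flower_succ_def mod_Suc_eq\<close>)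

lemma funpow_flower_succ_length: "(flower_succ r ^^ length xs) (i, xs) = (i, [])"
proof (induction xs rule: rev_induct)
  case Nil
  then show ?case by simp
next
  case (snoc x xs)
  have "flower_succ r (i, xs @ [x]) = (i, xs)" by (simp add: flower_succ_def)
  then show ?case using snoc by (simp only: length_append_singleton funpow_Suc_right comp_apply)
qed

lemma flower_succ_reaches_root:
  assumes "i < r"
  shows "(flower_succ r ^^ (r - i + length xs)) (i, xs) = (0, [])"
  using assms unfolding funpow_add by (simp add: funpow_flower_succ_length funpow_flower_succ_Nil)

lemma exact_period_flower_succ_root:
  assumes "r \<ge> 1"
  shows "exact_period (flower_succ r) r (0, [])"
  using assms by (auto simp: exact_period_def funpow_flower_succ_Nil)

lemma flower_succ_two_preimages:
  assumes "2 \<le> w" and "i < r" and "xs \<in> reg_tree_vertices w l" and "length xs < l"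
  obtains v1 v2 where "v1 \<in> {0..<r} \<times> reg_tree_vertices w l" "v2 \<in> {0..<r} \<times> reg_tree_vertices w l"
    "v1 \<noteq> v2" "flower_succ r v1 = (i, xs)" "flower_succ r v2 = (i, xs)"
proof (cases "xs = []")
  case True
  have "((i + r - 1) mod r + 1) mod r = i"
    using assms(2) by (simp add: mod_Suc_eq)
  then show ?thesis
    using that[of "((i + r - 1) mod r, [])" "(i, [1])"] assms True
    by (simp add: flower_succ_def reg_tree_vertices_def)
next
  case False
  have "xs @ [b] \<in> reg_tree_vertices w l" if "b < w" for b
    using assms False that by (auto simp: reg_tree_vertices_def)
  then show ?thesis
    using that[of "(i, xs @ [0])" "(i, xs @ [1])"] assms by (simp add: flower_succ_def)
qed

subsection \<open>Encoding the flower cycle in exponents\<close>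

definition tree_label :: "nat \<Rightarrow> nat list \<Rightarrow> nat" where
  "tree_label l xs = 2 ^ (l - length xs) * horner_sum id 2 xs"

lemma binary_horner_sum_less:
  "\<forall>a\<in>set xs. a < 2 \<Longrightarrow> horner_sum id 2 xs < (2::nat) ^ length xs"
  by (induction xs) auto

lemma binary_horner_sum_inj:
  "length xs = length ys \<Longrightarrow> \<forall>a\<in>set xs. a < 2 \<Longrightarrow> \<forall>a\<in>set ys. a < 2 \<Longrightarrow>
    horner_sum id 2 xs = horner_sum id (2::nat) ys \<Longrightarrow> xs = ys"
proof (induction xs arbitrary: ys)
  case Nil
  then show ?case by simp
next
  case (Cons a xs)
  then obtain b ys' where ys: "ys = b # ys'" by (cases ys) auto
  have "a + 2 * horner_sum id 2 xs = b + 2 * horner_sum id 2 ys'" "a < 2" "b < 2"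
    using Cons.prems ys by (simp_all add: id_def)
  then have "a = b" "horner_sum id 2 xs = horner_sum id 2 ys'" by presburger+
  then show ?case using Cons ys by auto
qed

lemma pow2_mult_odd_eq:
  fixes a b :: nat
  assumes "odd a" "odd b" "2 ^ i * a = 2 ^ j * b"
  shows "i = j \<and> a = b"
proof -
  have "multiplicity 2 (2 ^ i * a) = i" "multiplicity 2 (2 ^ j * b) = j"
    using assms(1,2) by (subst prime_elem_multiplicity_mult_distrib;
        auto simp: odd_pos not_dvd_imp_multiplicity_0)+
  then show ?thesis using assms(3) by simp
qed

lemma reg_tree_vertices_binary:
  assumes "xs \<in> reg_tree_vertices 2 l"
  shows "length xs \<le> l" and "\<forall>a\<in>set xs. a < 2" and "xs \<noteq> [] \<Longrightarrow> hd xs = 1"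
proof -
  show "length xs \<le> l" "\<forall>a\<in>set xs. a < 2"
    using assms by (auto simp: reg_tree_vertices_def)
  show "hd xs = 1" if "xs \<noteq> []"
  proof -
    have "1 \<le> hd xs" "hd xs < 2" using assms that hd_in_set[OF that] by (auto simp: reg_tree_vertices_def)
    then show ?thesis by simp
  qed
qed

lemma odd_horner_sum_reg_tree_vertex:
  assumes "xs \<in> reg_tree_vertices 2 l" and "xs \<noteq> []"
  shows "odd (horner_sum id 2 xs)"
proof -
  have "hd xs = 1" using reg_tree_vertices_binary(3) assms .
  then show ?thesis using \<open>xs \<noteq> []\<close> by (cases xs) auto
qed

lemma tree_label_less: "xs \<in> reg_tree_vertices 2 l \<Longrightarrow> tree_label l xs < 2 ^ l"
proof -
  assume V: "xs \<in> reg_tree_vertices 2 l"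
  have "tree_label l xs < 2 ^ (l - length xs) * 2 ^ length xs"
    unfolding tree_label_def using binary_horner_sum_less reg_tree_vertices_binary(2)[OF V] by simp
  also have "\<dots> = 2 ^ l" using reg_tree_vertices_binary(1)[OF V] by (simp flip: power_add)
  finally show ?thesis .
qed

lemma tree_label_butlast:
  assumes V: "xs \<in> reg_tree_vertices 2 l" and "xs \<noteq> []"
  shows "[2 * tree_label l xs = tree_label l (butlast xs)] (mod 2 ^ l)"
proof -
  obtain ys b where xs: "xs = ys @ [b]" using \<open>xs \<noteq> []\<close> by (metis append_butlast_last_id)
  define m where "m = length ys"
  have "m < l" using reg_tree_vertices_binary(1)[OF V] by (simp add: xs m_def)
  then have exps: "2 * 2 ^ (l - Suc m) = (2::nat) ^ (l - m)" "2 ^ (l - m) * 2 ^ m = (2::nat) ^ l"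
    by (simp_all flip: power_Suc power_add)
  have "2 * tree_label l xs = 2 * 2 ^ (l - Suc m) * (horner_sum id 2 ys + 2 ^ m * b)"
    by (simp add: tree_label_def xs horner_sum_append m_def)
  also have "\<dots> = tree_label l ys + 2 ^ l * b"
    unfolding exps(1) by (simp add: tree_label_def distrib_left mult.assoc[symmetric] exps(2) flip: m_def)
  finally show ?thesis by (simp add: xs cong_def)
qed

lemma inj_on_tree_label: "inj_on (tree_label l) (reg_tree_vertices 2 l)"
proof
  fix xs ys assume V: "xs \<in> reg_tree_vertices 2 l" "ys \<in> reg_tree_vertices 2 l"
    and eq: "tree_label l xs = tree_label l ys"
  have pos: "tree_label l zs > 0 \<longleftrightarrow> zs \<noteq> []" if "zs \<in> reg_tree_vertices 2 l" for zs
    using odd_horner_sum_reg_tree_vertex[OF that] by (auto simp: tree_label_def odd_pos)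
  show "xs = ys"
  proof (cases "xs = [] \<or> ys = []")
    case True
    then show ?thesis using pos V eq by metis
  next
    case False
    then have "l - length xs = l - length ys \<and> horner_sum id 2 xs = horner_sum id 2 ys"
      using pow2_mult_odd_eq odd_horner_sum_reg_tree_vertex V eq unfolding tree_label_def by blast
    moreover have "length xs \<le> l" "length ys \<le> l" using reg_tree_vertices_binary(1) V by auto
    ultimately show ?thesis
      using binary_horner_sum_inj reg_tree_vertices_binary(2) V by (metis diff_diff_cancel)
  qed
qed

lemma cong_mult_add_pow2_iff:
  fixes \<mu> c d r l s s' a a' :: nat
  assumes "odd \<mu>" and \<mu>: "\<mu> = c * d" and "ord d 2 = r"
  shows "[\<mu> * s + 2 ^ l * c * 2 ^ a = \<mu> * s' + 2 ^ l * c * 2 ^ a'] (mod 2 ^ l * \<mu>)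
           \<longleftrightarrow> [s = s'] (mod 2 ^ l) \<and> [a = a'] (mod r)"
    (is "[?x = ?x'] (mod _) \<longleftrightarrow> _")
proof -
  have cop: "coprime (2 ^ l) \<mu>" using \<open>odd \<mu>\<close> by simp
  have "odd c" "odd d" using \<open>odd \<mu>\<close> \<mu> by auto
  then have "c > 0" by (simp add: odd_pos)
  have "[?x = ?x'] (mod 2 ^ l) \<longleftrightarrow> [\<mu> * s = \<mu> * s'] (mod 2 ^ l)"
    by (simp add: cong_def mult.assoc)
  also have "\<dots> \<longleftrightarrow> [s = s'] (mod 2 ^ l)"
    using cop by (simp add: cong_mult_lcancel_nat coprime_commute)
  finally have two_part: "[?x = ?x'] (mod 2 ^ l) \<longleftrightarrow> [s = s'] (mod 2 ^ l)" .
  have "[?x = ?x'] (mod \<mu>) \<longleftrightarrow> [2 ^ l * (c * 2 ^ a) = 2 ^ l * (c * 2 ^ a')] (mod \<mu>)"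
    by (simp add: cong_def mult.assoc)
  also have "\<dots> \<longleftrightarrow> [c * 2 ^ a = c * 2 ^ a'] (mod c * d)"
    using cop by (simp add: cong_mult_lcancel_nat \<mu>)
  also have "\<dots> \<longleftrightarrow> [2 ^ a = 2 ^ a'] (mod d)"
    using \<open>c > 0\<close> by (simp add: cong_def mod_mult_mult1)
  also have "\<dots> \<longleftrightarrow> [a = a'] (mod r)"
    using order_divides_expdiff[of d 2 a a'] \<open>odd d\<close> \<open>ord d 2 = r\<close> by simp
  finally have odd_part: "[?x = ?x'] (mod \<mu>) \<longleftrightarrow> [a = a'] (mod r)" .
  have "[?x = ?x'] (mod 2 ^ l * \<mu>) \<longleftrightarrow> [?x = ?x'] (mod 2 ^ l) \<and> [?x = ?x'] (mod \<mu>)"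
    using cop coprime_cong_mult_nat cong_dvd_modulus_nat by (meson dvd_triv_left dvd_triv_right)
  then show ?thesis using two_part odd_part by blast
qed

text \<open>\<open>cycle_phase r (i, xs)\<close> is \<open>i - |xs|\<close> mod \<open>r\<close>, written without truncated subtraction.\<close>

definition cycle_phase :: "nat \<Rightarrow> nat \<times> 'a list \<Rightarrow> nat" where
  "cycle_phase r u = fst u + (r - 1) * length (snd u)"

definition flower_exponent :: "nat \<Rightarrow> nat \<Rightarrow> nat \<Rightarrow> nat \<Rightarrow> nat \<times> nat list \<Rightarrow> nat" where
  "flower_exponent \<mu> l c r u = \<mu> * tree_label l (snd u) + 2 ^ l * c * 2 ^ cycle_phase r u"

lemma cycle_phase_flower_succ:
  assumes "r \<ge> 1"
  shows "[cycle_phase r u + 1 = cycle_phase r (flower_succ r u)] (mod r)"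
proof (cases "snd u = []")
  case True
  then show ?thesis by (simp add: cycle_phase_def flower_succ_def cong_def mod_Suc_eq)
next
  case False
  obtain r' where "r = Suc r'" using \<open>r \<ge> 1\<close> by (cases r) auto
  with False have "cycle_phase r u + 1 = cycle_phase r (flower_succ r u) + r"
    by (cases "snd u" rule: rev_cases) (auto simp: cycle_phase_def flower_succ_def algebra_simps)
  then show ?thesis by (simp add: cong_def)
qed

lemma flower_exponent_flower_succ:
  assumes "odd \<mu>" and "\<mu> = c * d" and "ord d 2 = r" and "r \<ge> 1"
    and u: "u \<in> {0..<r} \<times> reg_tree_vertices 2 l"
  shows "[2 * flower_exponent \<mu> l c r u = flower_exponent \<mu> l c r (flower_succ r u)] (mod 2 ^ l * \<mu>)"
proof -
  have double: "2 * flower_exponent \<mu> l c r u =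
      \<mu> * (2 * tree_label l (snd u)) + 2 ^ l * c * 2 ^ (cycle_phase r u + 1)"
    by (simp add: flower_exponent_def algebra_simps)
  have "[2 * tree_label l (snd u) = tree_label l (snd (flower_succ r u))] (mod 2 ^ l)"
    using tree_label_butlast[of "snd u" l] u by (auto simp: flower_succ_def tree_label_def)
  then show ?thesis
    unfolding double flower_exponent_def[of _ _ _ _ "flower_succ r u"]
    using cong_mult_add_pow2_iff[OF assms(1-3)] cycle_phase_flower_succ[OF \<open>r \<ge> 1\<close>] by blast
qed

lemma flower_exponent_cong_imp_eq:
  assumes "odd \<mu>" and "\<mu> = c * d" and "ord d 2 = r"
    and u: "u \<in> {0..<r} \<times> reg_tree_vertices 2 l" and v: "v \<in> {0..<r} \<times> reg_tree_vertices 2 l"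
    and "[flower_exponent \<mu> l c r u = flower_exponent \<mu> l c r v] (mod 2 ^ l * \<mu>)"
  shows "u = v"
proof -
  have "[tree_label l (snd u) = tree_label l (snd v)] (mod 2 ^ l)"
    and phase: "[cycle_phase r u = cycle_phase r v] (mod r)"
    using assms(6) cong_mult_add_pow2_iff[OF assms(1-3)] unfolding flower_exponent_def by auto
  moreover have "snd u \<in> reg_tree_vertices 2 l" "snd v \<in> reg_tree_vertices 2 l" using u v by auto
  ultimately have "tree_label l (snd u) = tree_label l (snd v)"
    using cong_less_imp_eq_nat tree_label_less by blast
  then have snd_eq: "snd u = snd v" using inj_on_tree_label[of l] u v by (auto dest: inj_onD)
  then have "[fst u = fst v] (mod r)" using phase by (simp add: cycle_phase_def cong_add_rcancel_nat)
  then have "fst u = fst v" using cong_less_imp_eq_nat u v by auto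
  then show ?thesis using snd_eq by (simp add: prod_eq_iff)
qed

lemma odd_flower_exponent_leaf:
  assumes "odd \<mu>" and "l \<ge> 1" and "snd u \<in> reg_tree_vertices 2 l" and "length (snd u) = l"
  shows "odd (flower_exponent \<mu> l c r u)"
proof -
  have "snd u \<noteq> []" using assms(2,4) by auto
  then have "odd (tree_label l (snd u))"
    using odd_horner_sum_reg_tree_vertex assms(3,4) by (simp add: tree_label_def)
  then show ?thesis using assms(1,2) by (simp add: flower_exponent_def)
qed

subsection \<open>Squaring units modulo an odd prime power\<close>

lemma unit_graph_eq: "unit_graph n = functional_graph {x. x < n \<and> coprime x n} (\<lambda>x. x\<^sup>2 mod n)"
proof -
  have "coprime (x\<^sup>2 mod n) n" if "coprime x n" for x
    using that by (cases "n = 0") simp_all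
  moreover have "x\<^sup>2 mod n < n" if "x < n" for x using that by simp
  ultimately show ?thesis
    unfolding unit_graph_def induced_def sq_graph_def functional_graph_def by auto
qed

lemma square_mod_units_closed:
  "0 < n \<Longrightarrow> (\<lambda>x. x\<^sup>2 mod n) ` {x. x < n \<and> coprime x n} \<subseteq> {x. x < (n::nat) \<and> coprime x n}"
  by auto

lemma square_roots_mod_odd_prime_power:
  fixes p k z w :: nat
  assumes p: "prime p" "odd p" and "coprime z p" and "[z\<^sup>2 = w\<^sup>2] (mod p ^ k)"
  shows "[z = w] (mod p ^ k) \<or> [z + w = 0] (mod p ^ k)"
proof -
  define P Z W where "P = int p" and "Z = int z" and "W = int w"
  have "prime P" using p by (simp add: P_def)
  have dvd_prod: "P ^ k dvd (Z - W) * (Z + W)"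
    using assms(4) by (simp add: P_def Z_def W_def cong_int_iff[symmetric] cong_iff_dvd_diff
        power2_eq_square algebra_simps flip: of_nat_power)
  have "\<not> (P dvd Z - W \<and> P dvd Z + W)"
  proof
    assume "P dvd Z - W \<and> P dvd Z + W"
    then have "P dvd 2 * Z" by (metis dvd_add mult_2 diff_add_cancel add.left_commute)
    then have "int p dvd int (2 * z)" by (simp add: P_def Z_def)
    then have "p dvd 2 * z" by (simp only: of_nat_dvd_iff)
    then have "p dvd 2 \<or> p dvd z" using p prime_dvd_mult_iff by blast
    then show False
    proof
      assume "p dvd 2"
      then have "p \<le> 2" by (simp add: dvd_imp_le)
      then show False using p prime_ge_2_nat[of p] by (cases "p = 2") auto
    next
      assume "p dvd z"
      then show False using \<open>coprime z p\<close> p by (metis coprime_absorb_right not_prime_unit)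
    qed
  qed
  then consider "coprime (P ^ k) (Z - W)" | "coprime (P ^ k) (Z + W)"
    using \<open>prime P\<close> prime_imp_coprime coprime_power_left_iff by blast
  then show ?thesis
  proof cases
    case 1
    then have "P ^ k dvd Z + W" using dvd_prod coprime_dvd_mult_right_iff by blast
    then show ?thesis by (simp add: P_def Z_def W_def cong_0_iff flip: of_nat_power of_nat_add)
  next
    case 2
    then have "P ^ k dvd Z - W" using dvd_prod coprime_dvd_mult_left_iff by blast
    then show ?thesis
      by (simp add: P_def Z_def W_def cong_iff_dvd_diff flip: cong_int_iff of_nat_power)
  qed
qed

lemma square_root_mod_odd_prime_power_cases:
  fixes p k a b z :: nat
  assumes "prime p" "odd p" and "a < p ^ k" "b < p ^ k" "z < p ^ k" and "coprime a p" "coprime z p"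
    and "a \<noteq> b" and "[a\<^sup>2 = b\<^sup>2] (mod p ^ k)" and "[z\<^sup>2 = a\<^sup>2] (mod p ^ k)"
  shows "z = a \<or> z = b"
proof -
  have "\<not> [a = b] (mod p ^ k)" using assms(3,4,8) cong_less_imp_eq_nat by blast
  then have ab: "[a + b = 0] (mod p ^ k)"
    using square_roots_mod_odd_prime_power assms(1,2,6,9) by blast
  consider "[z = a] (mod p ^ k)" | "[z + a = 0] (mod p ^ k)"
    using square_roots_mod_odd_prime_power assms(1,2,7,10) by blast
  then show ?thesis
  proof cases
    case 1
    then show ?thesis using assms(3,5) cong_less_imp_eq_nat by blast
  next
    case 2
    then have "[z + a = b + a] (mod p ^ k)" using ab by (metis add.commute cong_sym cong_trans)
    then show ?thesis using assms(4,5) cong_less_imp_eq_nat cong_add_rcancel_nat by blast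
  qed
qed

lemma even_exponent_of_square:
  fixes n g z e :: nat
  assumes g: "residue_primroot n g" and "even (totient n)" and "coprime z n"
    and sq: "z\<^sup>2 mod n = g ^ e mod n"
  shows "even e"
proof -
  have "n > 1" using g assms(2) by (cases "n = 1") (auto simp: residue_primroot_def)
  moreover have "coprime (z mod n) n" using \<open>coprime z n\<close> \<open>n > 1\<close> by simp
  ultimately have "z mod n \<in> totatives n"
    by (auto simp: in_totatives_iff intro!: Nat.gr0I dest: less_imp_le_nat)
  then obtain a where "z mod n = g ^ a mod n"
    using residue_primroot_is_generator[OF \<open>n > 1\<close> g] by (auto simp: bij_betw_def)
  then have "g ^ (2 * a) mod n = g ^ e mod n"
    using sq by (metis power_mod power_mult mult.commute)
  then have "[2 * a = e] (mod totient n)"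
    using g order_divides_expdiff[of n g] by (simp add: residue_primroot_def cong_def)
  then have "[2 * a = e] (mod 2)" using assms(2) cong_dvd_modulus_nat by blast
  then show ?thesis by (simp add: cong_def even_iff_mod_2_eq_zero)
qed

subsection \<open>Flower components from divisors of the odd part\<close>

lemma odd_prime_power_gt_2: "prime p \<Longrightarrow> odd p \<Longrightarrow> k \<ge> 1 \<Longrightarrow> p ^ k > (2::nat)"
  using prime_ge_2_nat[of p] self_le_power[of p k] by (cases "p = 2") auto

context
  fixes p k \<theta> \<mu> c d r g :: nat
  assumes p: "prime p" "odd p" and "k \<ge> 1" and tot: "totient (p ^ k) = 2 ^ \<theta> * \<mu>"
    and "odd \<mu>" and \<mu>: "\<mu> = c * d" and "ord d 2 = r" and "r \<ge> 1"
    and g: "residue_primroot (p ^ k) g"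
begin

definition flower_embedding :: "nat \<times> nat list \<Rightarrow> nat" where
  "flower_embedding u = g ^ flower_exponent \<mu> \<theta> c r u mod p ^ k"

lemma primroot_pow_mod_eq_iff: "g ^ a mod p ^ k = g ^ b mod p ^ k \<longleftrightarrow> [a = b] (mod 2 ^ \<theta> * \<mu>)"
  using g tot order_divides_expdiff[of "p ^ k" g a b] by (simp add: residue_primroot_def cong_def)

lemma flower_embedding_unit: "flower_embedding u < p ^ k \<and> coprime (flower_embedding u) p"
proof -
  have pos: "p ^ k > 0" using p by (simp add: prime_gt_0_nat)
  have "coprime g (p ^ k)" using g coprime_commute unfolding residue_primroot_def by blast
  then have "coprime (g ^ flower_exponent \<mu> \<theta> c r u) (p ^ k)"
    by (simp del: coprime_power_right_iff)
  then have "coprime (flower_embedding u) (p ^ k)"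
    using coprime_mod_left_iff[of "p ^ k"] pos unfolding flower_embedding_def by blast
  then show ?thesis
    using mod_less_divisor[OF pos] \<open>k \<ge> 1\<close> by (simp add: flower_embedding_def)
qed

lemma inj_on_flower_embedding: "inj_on flower_embedding ({0..<r} \<times> reg_tree_vertices 2 \<theta>)"
  using flower_exponent_cong_imp_eq[OF \<open>odd \<mu>\<close> \<mu> \<open>ord d 2 = r\<close>]
  by (auto simp: inj_on_def flower_embedding_def primroot_pow_mod_eq_iff)

lemma flower_embedding_flower_succ:
  assumes "u \<in> {0..<r} \<times> reg_tree_vertices 2 \<theta>"
  shows "flower_embedding (flower_succ r u) = (flower_embedding u)\<^sup>2 mod p ^ k"
proof -
  have "(flower_embedding u)\<^sup>2 mod p ^ k = g ^ (2 * flower_exponent \<mu> \<theta> c r u) mod p ^ k"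
    by (metis flower_embedding_def power_mod power_mult mult.commute)
  also have "\<dots> = flower_embedding (flower_succ r u)"
    using flower_exponent_flower_succ[OF \<open>odd \<mu>\<close> \<mu> \<open>ord d 2 = r\<close> \<open>r \<ge> 1\<close> assms]
    by (simp add: flower_embedding_def primroot_pow_mod_eq_iff)
  finally show ?thesis by simp
qed

text \<open>A leaf has an odd exponent, so its image is not a square; any other vertex has two
  preimages in the flower, whose images are then the two square roots of its image.\<close>

lemma square_root_of_flower_embedding:
  assumes u: "u \<in> {0..<r} \<times> reg_tree_vertices 2 \<theta>"
    and z: "z < p ^ k" "coprime z p" and sq: "z\<^sup>2 mod p ^ k = flower_embedding u"
  shows "z \<in> flower_embedding ` ({0..<r} \<times> reg_tree_vertices 2 \<theta>)"
proof (cases "length (snd u) < \<theta>")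
  case True
  obtain i xs where u_eq: "u = (i, xs)" by (cases u)
  then have "i < r" "xs \<in> reg_tree_vertices 2 \<theta>" "length xs < \<theta>" using u True by auto
  then obtain v1 v2 where v: "v1 \<in> {0..<r} \<times> reg_tree_vertices 2 \<theta>"
      "v2 \<in> {0..<r} \<times> reg_tree_vertices 2 \<theta>" "v1 \<noteq> v2" "flower_succ r v1 = u" "flower_succ r v2 = u"
    using flower_succ_two_preimages[OF order_refl] unfolding u_eq by blast
  then have "flower_embedding v1 \<noteq> flower_embedding v2"
    using inj_on_flower_embedding by (meson inj_onD)
  moreover have "(flower_embedding v1)\<^sup>2 mod p ^ k = flower_embedding u"
    "(flower_embedding v2)\<^sup>2 mod p ^ k = flower_embedding u"
    using flower_embedding_flower_succ v by metis+
  then have "[(flower_embedding v1)\<^sup>2 = (flower_embedding v2)\<^sup>2] (mod p ^ k)"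
    "[z\<^sup>2 = (flower_embedding v1)\<^sup>2] (mod p ^ k)"
    using sq by (simp_all add: cong_def)
  ultimately have "z = flower_embedding v1 \<or> z = flower_embedding v2"
    using square_root_mod_odd_prime_power_cases[OF p] flower_embedding_unit z by blast
  then show ?thesis using v by blast
next
  case False
  have "snd u \<in> reg_tree_vertices 2 \<theta>" using u by auto
  moreover from this have "length (snd u) = \<theta>"
    using False reg_tree_vertices_binary(1) by (meson le_neq_implies_less)
  moreover have "even (totient (p ^ k))" using totient_even odd_prime_power_gt_2[OF p \<open>k \<ge> 1\<close>] .
  then have "\<theta> \<ge> 1" using tot \<open>odd \<mu>\<close> by (cases \<theta>) auto
  ultimately have "odd (flower_exponent \<mu> \<theta> c r u)"
    using odd_flower_exponent_leaf[OF \<open>odd \<mu>\<close>] by blast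
  moreover have "even (flower_exponent \<mu> \<theta> c r u)"
    using even_exponent_of_square[OF g \<open>even (totient (p ^ k))\<close>] z sq \<open>k \<ge> 1\<close>
    by (simp add: flower_embedding_def)
  ultimately show ?thesis by simp
qed

lemma has_component_iso_flower_embedding:
  "has_component_iso (unit_graph (p ^ k)) (flower_cycle r (reg_tree 2 \<theta>))"
proof -
  define U where "U = {x. x < p ^ k \<and> coprime x (p ^ k)}"
  define W where "W = {0..<r} \<times> reg_tree_vertices 2 \<theta>"
  have "has_component_iso (functional_graph U (\<lambda>x. x\<^sup>2 mod p ^ k)) (functional_graph W (flower_succ r))"
  proof (rule has_component_iso_functional_graphI[where h = flower_embedding and w = "(0, [])"])
    show "(\<lambda>x. x\<^sup>2 mod p ^ k) ` U \<subseteq> U"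
      unfolding U_def by (rule square_mod_units_closed) (use p in \<open>simp add: prime_gt_0_nat\<close>)
    show "flower_succ r ` W \<subseteq> W" by (simp add: W_def flower_succ_closed)
    show "inj_on flower_embedding W" by (simp add: W_def inj_on_flower_embedding)
    show "flower_embedding ` W \<subseteq> U" using flower_embedding_unit \<open>k \<ge> 1\<close> by (auto simp: U_def)
    show "flower_embedding (flower_succ r u) = (flower_embedding u)\<^sup>2 mod p ^ k" if "u \<in> W" for u
      using flower_embedding_flower_succ that by (simp add: W_def)
    show "(0, []) \<in> W" using \<open>r \<ge> 1\<close> by (simp add: W_def)
    show "\<exists>j. (flower_succ r ^^ j) u = (0, [])" if u: "u \<in> W" for u
    proof -
      obtain i xs where "u = (i, xs)" "i < r" using u by (auto simp: W_def)
      then show ?thesis using flower_succ_reaches_root by blast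
    qed
    show "z \<in> flower_embedding ` W" if "u \<in> W" "z \<in> U" "z\<^sup>2 mod p ^ k = flower_embedding u" for u z
      using square_root_of_flower_embedding that \<open>k \<ge> 1\<close> by (simp add: U_def W_def)
  qed
  then show ?thesis by (simp add: unit_graph_eq flower_cycle_reg_tree_eq U_def W_def)
qed

end

lemma has_component_iso_unit_graph_flower_cycle:
  fixes p k \<theta> \<mu> r d :: nat
  assumes p: "prime p" "odd p" and "k \<ge> 1" and "totient (p ^ k) = 2 ^ \<theta> * \<mu>"
    and "odd \<mu>" and "r \<ge> 1" and "ord d 2 = r" and "d dvd \<mu>"
  shows "has_component_iso (unit_graph (p ^ k)) (flower_cycle r (reg_tree 2 \<theta>))"
proof -
  obtain c where \<mu>: "\<mu> = c * d" using \<open>d dvd \<mu>\<close> by (metis dvd_def mult.commute)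
  obtain g where "\<forall>k>0. residue_primroot (p ^ k) g"
    using residue_primroot_odd_prime_power_exists[OF p] by blast
  then have "residue_primroot (p ^ k) g" using \<open>k \<ge> 1\<close> by simp
  then show ?thesis by (rule has_component_iso_flower_embedding[OF p assms(3-5) \<mu> assms(7,6)])
qed

subsection \<open>Exact periods under squaring\<close>

lemma triggering_divisor_exists:
  "0 < D \<Longrightarrow> odd D \<Longrightarrow> ord D 2 = r \<Longrightarrow> \<exists>d. triggering_divisor d r \<and> d dvd D"
proof (induction D rule: less_induct)
  case (less D)
  show ?case
  proof (cases "triggering_divisor D r")
    case True
    then show ?thesis by (blast intro: dvd_refl)
  next
    case False
    then obtain e where e: "0 < e" "e dvd D" "e \<noteq> D" "ord e 2 = r"
      using less.prems unfolding triggering_divisor_def by blast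
    then have "e < D" using less.prems(1) by (simp add: dvd_imp_le le_neq_implies_less)
    moreover have "odd e" using e(2) less.prems(2) by (meson dvd_trans)
    ultimately obtain d where "triggering_divisor d r" "d dvd e" using less.IH e by blast
    then show ?thesis using e dvd_trans by blast
  qed
qed

lemma funpow_square_mod: "((\<lambda>x. x\<^sup>2 mod n) ^^ j) (x mod n) = x ^ 2 ^ j mod (n::nat)"
proof (induction j)
  case 0
  then show ?case by simp
next
  case (Suc j)
  have "(x ^ 2 ^ j mod n)\<^sup>2 mod n = (x ^ 2 ^ j)\<^sup>2 mod n" by (rule power_mod)
  also have "(x ^ 2 ^ j)\<^sup>2 = x ^ 2 ^ Suc j" by (simp add: power_mult[symmetric] mult.commute)
  finally show ?case using Suc by simp
qed

lemma ord_ord_two_of_exact_period: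
  fixes n x r :: nat
  assumes "coprime x n" and "x < n" and "r \<ge> 1" and per: "exact_period (\<lambda>x. x\<^sup>2 mod n) r x"
  shows "odd (ord n x) \<and> ord (ord n x) 2 = r"
proof -
  define D where "D = ord n x"
  have period_iff: "((\<lambda>x. x\<^sup>2 mod n) ^^ j) x = x \<longleftrightarrow> [2 ^ j = 1] (mod D)" for j
  proof -
    have "((\<lambda>x. x\<^sup>2 mod n) ^^ j) x = x \<longleftrightarrow> [x ^ 2 ^ j = x ^ 1] (mod n)"
      using funpow_square_mod[where n = n and j = j and x = x] \<open>x < n\<close> by (simp add: cong_def)
    also have "\<dots> \<longleftrightarrow> [2 ^ j = 1] (mod D)"
      using order_divides_expdiff[of n x "2 ^ j" 1] \<open>coprime x n\<close> by (simp add: D_def coprime_commute)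
    finally show ?thesis .
  qed
  have r_cong: "[2 ^ r = 1] (mod D)" using per period_iff by (simp add: exact_period_def)
  have "odd D"
  proof
    assume "even D"
    then have "[(2::nat) ^ r = 1] (mod 2)" using r_cong cong_dvd_modulus_nat by blast
    then show False using \<open>r \<ge> 1\<close> by (simp add: cong_def)
  qed
  define q where "q = ord D 2"
  have "0 < q" using \<open>odd D\<close> ord_eq_0[of D 2] by (simp add: q_def)
  have "q dvd r" using r_cong ord_divides by (simp add: q_def)
  then have "q \<le> r" using \<open>r \<ge> 1\<close> by (simp add: dvd_imp_le)
  moreover have "\<not> q < r"
  proof
    assume "q < r"
    then have "((\<lambda>x. x\<^sup>2 mod n) ^^ q) x \<noteq> x" using per \<open>0 < q\<close> by (simp add: exact_period_def)
    moreover have "[2 ^ q = 1] (mod D)" using ord[of 2 D] by (simp add: q_def)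
    ultimately show False using period_iff by simp
  qed
  ultimately have "q = r" by simp
  then show ?thesis using \<open>odd D\<close> by (simp add: D_def q_def)
qed

lemma triggering_divisor_of_exact_period:
  fixes n x r \<theta> \<mu> :: nat
  assumes "coprime x n" and "x < n" and "r \<ge> 1" and "exact_period (\<lambda>x. x\<^sup>2 mod n) r x"
    and "totient n = 2 ^ \<theta> * \<mu>"
  shows "\<exists>d. triggering_divisor d r \<and> d dvd \<mu>"
proof -
  have "odd (ord n x)" "ord (ord n x) 2 = r"
    using ord_ord_two_of_exact_period assms(1-4) by auto
  moreover have "ord n x dvd 2 ^ \<theta> * \<mu>"
    using order_divides_totient assms(1,5) by (metis coprime_commute)
  moreover have "coprime (ord n x) (2 ^ \<theta>)" using \<open>odd (ord n x)\<close> by simp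
  ultimately have "ord n x dvd \<mu>" by (simp add: coprime_dvd_mult_right_iff)
  moreover obtain d where "triggering_divisor d r" "d dvd ord n x"
    using triggering_divisor_exists[OF odd_pos] \<open>odd (ord n x)\<close> \<open>ord (ord n x) 2 = r\<close> by blast
  ultimately show ?thesis using dvd_trans by blast
qed

theorem corollary14:
  fixes p k \<theta> \<mu> r :: nat
  assumes "prime p" and "odd p" and "k \<ge> 1"
    and "totient (p ^ k) = 2 ^ \<theta> * \<mu>" and "odd \<mu>"
    and "r \<ge> 1"
  shows "has_component_iso (unit_graph (p ^ k)) (flower_cycle r (reg_tree 2 \<theta>))
         \<longleftrightarrow> (\<exists>d. triggering_divisor d r \<and> d dvd \<mu>)"
proof
  assume "\<exists>d. triggering_divisor d r \<and> d dvd \<mu>"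
  then show "has_component_iso (unit_graph (p ^ k)) (flower_cycle r (reg_tree 2 \<theta>))"
    using has_component_iso_unit_graph_flower_cycle assms by (auto simp: triggering_divisor_def)
next
  assume "has_component_iso (unit_graph (p ^ k)) (flower_cycle r (reg_tree 2 \<theta>))"
  then have iso: "has_component_iso
      (functional_graph {x. x < p ^ k \<and> coprime x (p ^ k)} (\<lambda>x. x\<^sup>2 mod p ^ k))
      (functional_graph ({0..<r} \<times> reg_tree_vertices 2 \<theta>) (flower_succ r))"
    by (simp only: unit_graph_eq flower_cycle_reg_tree_eq)
  have root: "(0, []) \<in> {0..<r} \<times> reg_tree_vertices 2 \<theta>" using \<open>r \<ge> 1\<close> by simp
  obtain x where "x < p ^ k" "coprime x (p ^ k)" "exact_period (\<lambda>x. x\<^sup>2 mod p ^ k) r x"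
    using exact_period_of_has_component_iso[OF iso flower_succ_closed root
        exact_period_flower_succ_root[OF \<open>r \<ge> 1\<close>]] by blast
  then show "\<exists>d. triggering_divisor d r \<and> d dvd \<mu>"
    using triggering_divisor_of_exact_period assms(4,6) by blast
qed

end
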